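(* Let $p\in(0,1)$, $\gamma>0$, $B>0$, $w\in\mathbb{N}$, for each $N\in\mathbb{N}$ let $(\xi_j^{(N)*})_{j=1}^N$ be the unique maximizer of $\mathcal{T}_N$, and let $B^{(N)}=B-\sum_{i=1}^N\xi_i^{(N)*}$. Then $\lim_{N\to\infty}B^{(N)}=0$.
   Context: Logarithms are base 2. For an admissible (nonnegative, with sum at most $B$) sequence $(x_j)_{j\ge1}$, $$\mathcal{T}_\infty(x_1,x_2,\dots)=\sum_{k=1}^{w}p^2(1-p)^{k-1}\frac{k}{2}\log_2\!\Big(1+\gamma\frac{B}{k}\Big)+\sum_{j=1}^{\infty}p(1-p)^{j+w-1}\frac12\log_2(1+\gamma x_j)+\sum_{k=1}^{\infty}p^2(1-p)^{k+w-1}\frac{w}{2}\log_2\!\Big(1+\gamma\frac{B-\sum_{j=1}^{k}x_j}{w}\Big).$$ For $N\in\mathbb{N}$ and $\xi_1,\dots,\xi_N\ge0$ with $\sum_{j=1}^N\xi_j\le B$, define $\mathcal{T}_N(\xi_1,\dots,\xi_N)=\mathcal{T}_\infty(\xi_1,\dots,\xi_N,0,0,\dots)$. $\mathcal{T}_N$ has a unique maximizer over this compact set, denoted $(\xi_j^{(N)*})_{j=1}^N$. *)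

theory Defs
  imports "HOL-Analysis.Analysis"
begin

text \<open>Sequences are functions nat => real; only indices j >= 1 are used (x 0 is ignored).\<close>

definition T_inf :: "real \<Rightarrow> real \<Rightarrow> real \<Rightarrow> nat \<Rightarrow> (nat \<Rightarrow> real) \<Rightarrow> real" where
  "T_inf p \<gamma> B w x =
     (\<Sum>k=1..w. p^2 * (1-p)^(k-1) * (real k / 2) * log 2 (1 + \<gamma> * B / real k))
   + (\<Sum>j. p * (1-p)^(Suc j + w - 1) * (1/2) * log 2 (1 + \<gamma> * x (Suc j)))
   + (\<Sum>k. p^2 * (1-p)^(Suc k + w - 1) * (real w / 2)
            * log 2 (1 + \<gamma> * (B - (\<Sum>j=1..Suc k. x j)) / real w))"

definition T_N :: "real \<Rightarrow> real \<Rightarrow> real \<Rightarrow> nat \<Rightarrow> nat \<Rightarrow> (nat \<Rightarrow> real) \<Rightarrow> real" where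
  "T_N p \<gamma> B w N \<xi> = T_inf p \<gamma> B w (\<lambda>j. if 1 \<le> j \<and> j \<le> N then \<xi> j else 0)"

definition feasible_N :: "real \<Rightarrow> nat \<Rightarrow> (nat \<Rightarrow> real) set" where
  "feasible_N B N = {\<xi>. (\<forall>j\<in>{1..N}. 0 \<le> \<xi> j) \<and> (\<Sum>j=1..N. \<xi> j) \<le> B}"

definition is_maximizer_N :: "real \<Rightarrow> real \<Rightarrow> real \<Rightarrow> nat \<Rightarrow> nat \<Rightarrow> (nat \<Rightarrow> real) \<Rightarrow> bool" where
  "is_maximizer_N p \<gamma> B w N \<xi> \<longleftrightarrow>
     \<xi> \<in> feasible_N B N \<and> (\<forall>\<eta>\<in>feasible_N B N. T_N p \<gamma> B w N \<eta> \<le> T_N p \<gamma> B w N \<xi>)"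

end

theory Submission
  imports Defs
begin

(* Let R be the unspent budget of a maximizer. Moving an amount \<delta> of it into coordinate j
   raises the j-th allocation term by at least P \<gamma> \<delta> / (2 ln 2 (1 + \<gamma> (\<xi>_j + \<delta>))),
   P = p (1-p)^(j-1+w), while the remainder terms with k >= j - 1 lose at most a geometric
   tail summing to P \<gamma> \<delta> / (2 ln 2 (1 + \<gamma> (R - \<delta>) / w)). Optimality therefore forces
   \<xi>_j >= R / w for every j <= N, so N R / w <= B and R <= w B / N. *)

lemma log_diff_le:
  fixes b x y :: real
  assumes "1 < b" "0 < x" "0 < y"
  shows "log b x - log b y \<le> (x - y) / (y * ln b)"
proof -
  have "(ln x - ln y) / ln b \<le> (x - y) / y / ln b"
    using assms by (intro divide_right_mono ln_diff_le) auto
  then show ?thesis by (simp add: log_def diff_divide_distrib[symmetric] mult.commute)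
qed

lemma geometric_tail_sums:
  fixes q :: "'a::real_normed_field"
  assumes "norm q < 1"
  shows "(\<lambda>k. if m \<le> k then q^k else 0) sums (q^m / (1 - q))"
proof -
  have "(\<lambda>i. q^m * q^i) sums (q^m * (1 / (1 - q)))"
    using assms by (intro sums_mult geometric_sums)
  then have "(\<lambda>i. (\<lambda>k. if m \<le> k then q^k else 0) (i + m)) sums (q^m / (1 - q))"
    by (simp add: power_add mult.commute)
  then show ?thesis by (subst (asm) sums_zero_iff_shift) auto
qed

lemma summable_geometric_majorant:
  fixes f :: "nat \<Rightarrow> real"
  assumes "0 \<le> q" "q < 1" "\<And>k. 0 \<le> f k" "\<And>k. f k \<le> C * q^k"
  shows "summable f"
proof (rule summable_comparison_test')
  show "summable (\<lambda>k. C * q^k)" using assms(1,2) by (intro summable_mult summable_geometric) simp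
  show "norm (f k) \<le> C * q^k" for k using assms(3,4) by simp
qed

definition admissible :: "real \<Rightarrow> (nat \<Rightarrow> real) \<Rightarrow> bool" where
  "admissible B x \<longleftrightarrow> (\<forall>i\<ge>1. 0 \<le> x i) \<and> (\<forall>n. (\<Sum>i=1..n. x i) \<le> B)"

lemma admissible_partial_sum_bounds:
  assumes "admissible B x"
  shows "0 \<le> (\<Sum>i=1..n. x i)" and "(\<Sum>i=1..n. x i) \<le> B"
  using assms by (auto simp: admissible_def intro: sum_nonneg)

lemma admissible_le:
  assumes "admissible B x" "1 \<le> i"
  shows "0 \<le> x i" and "x i \<le> B"
proof -
  show "0 \<le> x i" using assms by (simp add: admissible_def)
  have "x i \<le> (\<Sum>k=1..i. x k)"
    using assms by (intro member_le_sum) (auto simp: admissible_def)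
  then show "x i \<le> B" using admissible_partial_sum_bounds(2)[OF assms(1), of i] by linarith
qed

lemma sum_bump:
  fixes x :: "nat \<Rightarrow> real"
  assumes "1 \<le> j"
  shows "(\<Sum>i=1..n. (x(j := x j + \<delta>)) i) = (\<Sum>i=1..n. x i) + (if j \<le> n then \<delta> else 0)"
proof -
  have "(\<Sum>i=1..n. (x(j := x j + \<delta>)) i) = (\<Sum>i=1..n. x i + (if i = j then \<delta> else 0))"
    by (intro sum.cong) auto
  then show ?thesis using assms by (simp add: sum.distrib)
qed

lemma admissible_mono:
  assumes "admissible B x" "B \<le> B'"
  shows "admissible B' x"
  using assms by (auto simp: admissible_def intro: order_trans)

lemma admissible_bump:
  assumes "admissible (B - R) x" "1 \<le> j" "0 \<le> \<delta>" "\<delta> \<le> R"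
  shows "admissible B (x(j := x j + \<delta>))"
  unfolding admissible_def
proof safe
  show "0 \<le> (x(j := x j + \<delta>)) i" if "1 \<le> i" for i
    using assms(1,3) that by (simp add: admissible_def)
  show "(\<Sum>i=1..n. (x(j := x j + \<delta>)) i) \<le> B" for n
    using admissible_partial_sum_bounds(2)[OF assms(1), of n] assms(3,4)
    unfolding sum_bump[OF assms(2)] by simp
qed

definition allocation_term :: "real \<Rightarrow> real \<Rightarrow> nat \<Rightarrow> (nat \<Rightarrow> real) \<Rightarrow> nat \<Rightarrow> real" where
  "allocation_term p \<gamma> w x k = p * (1-p)^(k + w) * (1/2) * log 2 (1 + \<gamma> * x (Suc k))"

definition remainder_term :: "real \<Rightarrow> real \<Rightarrow> real \<Rightarrow> nat \<Rightarrow> (nat \<Rightarrow> real) \<Rightarrow> nat \<Rightarrow> real" where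
  "remainder_term p \<gamma> B w x k =
     p^2 * (1-p)^(k + w) * (real w / 2) * log 2 (1 + \<gamma> * (B - (\<Sum>j=1..Suc k. x j)) / real w)"

lemma T_inf_split:
  "T_inf p \<gamma> B w x =
     (\<Sum>k=1..w. p^2 * (1-p)^(k-1) * (real k / 2) * log 2 (1 + \<gamma> * B / real k))
   + suminf (allocation_term p \<gamma> w x) + suminf (remainder_term p \<gamma> B w x)"
  by (simp add: T_inf_def allocation_term_def[abs_def] remainder_term_def[abs_def])

lemma summable_allocation_term:
  assumes "0 < p" "p < 1" "0 \<le> \<gamma>" "admissible B x"
  shows "summable (allocation_term p \<gamma> w x)"
proof (rule summable_geometric_majorant[where q = "1 - p"])
  fix k
  define c where "c = p * (1-p)^w * (1/2) * (1-p)^k"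
  have c: "0 \<le> c" using assms(1,2) by (simp add: c_def)
  have split: "allocation_term p \<gamma> w x k = c * log 2 (1 + \<gamma> * x (Suc k))"
    by (simp add: allocation_term_def c_def power_add mult_ac)
  have x: "0 \<le> x (Suc k)" "x (Suc k) \<le> B" using admissible_le[OF assms(4)] by auto
  have t: "1 \<le> 1 + \<gamma> * x (Suc k)" "1 + \<gamma> * x (Suc k) \<le> 1 + \<gamma> * B"
    using assms(3) x by (auto intro: mult_left_mono)
  then show "0 \<le> allocation_term p \<gamma> w x k" using c split by simp
  have "c * log 2 (1 + \<gamma> * x (Suc k)) \<le> c * log 2 (1 + \<gamma> * B)"
    using t c by (intro mult_left_mono log_mono) auto
  then show "allocation_term p \<gamma> w x k \<le> (p * (1-p)^w * (1/2) * log 2 (1 + \<gamma> * B)) * (1-p)^k"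
    using split by (simp add: c_def mult_ac)
qed (use assms in auto)

lemma summable_remainder_term:
  assumes "0 < p" "p < 1" "0 \<le> \<gamma>" "admissible B x"
  shows "summable (remainder_term p \<gamma> B w x)"
proof (rule summable_geometric_majorant[where q = "1 - p"])
  fix k
  define c where "c = p^2 * (1-p)^w * (real w / 2) * (1-p)^k"
  define S where "S = (\<Sum>j=1..Suc k. x j)"
  have c: "0 \<le> c" using assms(1,2) by (simp add: c_def)
  have split: "remainder_term p \<gamma> B w x k = c * log 2 (1 + \<gamma> * (B - S) / real w)"
    by (simp add: remainder_term_def c_def S_def power_add mult_ac)
  have S: "0 \<le> S" "S \<le> B"
    unfolding S_def by (fact admissible_partial_sum_bounds[OF assms(4)])+
  have t: "1 \<le> 1 + \<gamma> * (B - S) / real w" "1 + \<gamma> * (B - S) / real w \<le> 1 + \<gamma> * B / real w"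
    using assms(3) S by (auto intro!: divide_right_mono mult_left_mono)
  then show "0 \<le> remainder_term p \<gamma> B w x k" using c split by simp
  have "c * log 2 (1 + \<gamma> * (B - S) / real w) \<le> c * log 2 (1 + \<gamma> * B / real w)"
    using t c by (intro mult_left_mono log_mono) auto
  then show "remainder_term p \<gamma> B w x k \<le> (p^2 * (1-p)^w * (real w / 2) * log 2 (1 + \<gamma> * B / real w)) * (1-p)^k"
    using split by (simp add: c_def mult_ac)
qed (use assms in auto)

lemma allocation_series_gain_ge:
  assumes "0 < p" "p < 1" "0 < \<gamma>" "1 \<le> j"
    and "admissible B x" "admissible B (x(j := x j + \<delta>))"
  shows "p * (1-p)^(j - 1 + w) * (\<gamma> * \<delta> / (2 * (1 + \<gamma> * (x j + \<delta>)) * ln 2))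
    \<le> suminf (allocation_term p \<gamma> w (x(j := x j + \<delta>))) - suminf (allocation_term p \<gamma> w x)"
proof -
  let ?y = "x(j := x j + \<delta>)"
  define a where "a = 1 + \<gamma> * (x j + \<delta>)"
  define b where "b = 1 + \<gamma> * x j"
  obtain i where j: "j = Suc i" using assms(4) by (cases j) auto
  have "0 \<le> ?y j" "0 \<le> x j" using admissible_le(1) assms by blast+
  then have ab: "1 \<le> a" "1 \<le> b" using assms(3) by (simp_all add: a_def b_def)
  have log_gain: "(a - b) / (a * ln 2) \<le> log 2 a - log 2 b"
    using log_diff_le[of 2 b a] ab by (simp add: diff_divide_distrib)
  have single: "(\<lambda>k. allocation_term p \<gamma> w ?y k - allocation_term p \<gamma> w x k)
      = (\<lambda>k. if k = i then allocation_term p \<gamma> w ?y i - allocation_term p \<gamma> w x i else 0)"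
    using j by (intro ext) (auto simp: allocation_term_def)
  have "suminf (allocation_term p \<gamma> w ?y) - suminf (allocation_term p \<gamma> w x)
      = allocation_term p \<gamma> w ?y i - allocation_term p \<gamma> w x i"
    using summable_allocation_term assms
    by (subst suminf_diff) (auto simp: single intro!: sums_unique[symmetric] sums_single)
  also have "\<dots> = p * (1-p)^(j - 1 + w) / 2 * (log 2 a - log 2 b)"
    using j by (simp add: allocation_term_def a_def b_def algebra_simps)
  also have "\<dots> \<ge> p * (1-p)^(j - 1 + w) / 2 * ((a - b) / (a * ln 2))"
    using log_gain assms(1,2) by (intro mult_left_mono) auto
  finally show ?thesis by (simp add: a_def b_def algebra_simps)
qed

lemma remainder_term_loss_le:
  assumes "0 < p" "p < 1" "0 \<le> \<gamma>" "1 \<le> w" "1 \<le> j" "0 \<le> \<delta>" "\<delta> \<le> R"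
    and "admissible (B - R) x"
  shows "remainder_term p \<gamma> B w x k - remainder_term p \<gamma> B w (x(j := x j + \<delta>)) k
    \<le> p^2 * (1-p)^w * (\<gamma> * \<delta> / (2 * (1 + \<gamma> * (R - \<delta>) / real w) * ln 2))
        * (if j - 1 \<le> k then (1-p)^k else 0)"
proof (cases "j - 1 \<le> k")
  case False
  then have "(\<Sum>i=1..Suc k. (x(j := x j + \<delta>)) i) = (\<Sum>i=1..Suc k. x i)"
    unfolding sum_bump[OF assms(5)] by simp
  then show ?thesis using False unfolding remainder_term_def by simp
next
  case True
  then have "j \<le> Suc k" by linarith
  define S where "S = (\<Sum>i=1..Suc k. x i)"
  define a where "a = 1 + \<gamma> * (B - S) / real w"
  define b where "b = 1 + \<gamma> * (B - (S + \<delta>)) / real w"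
  define c where "c = 1 + \<gamma> * (R - \<delta>) / real w"
  have w: "0 < real w" using assms(4) by simp
  have "S \<le> B - R" unfolding S_def by (fact admissible_partial_sum_bounds(2)[OF assms(8)])
  then have "\<gamma> * (R - \<delta>) \<le> \<gamma> * (B - (S + \<delta>))" using assms(3) by (intro mult_left_mono) auto
  then have cb: "c \<le> b" unfolding b_def c_def using w by (simp add: divide_right_mono)
  have c: "1 \<le> c" using assms(3,7) w by (simp add: c_def)
  have ab: "a - b = \<gamma> * \<delta> / real w"
    by (simp add: a_def b_def diff_divide_distrib[symmetric] algebra_simps)
  then have "0 \<le> a - b" using assms(3,6) by simp
  have "log 2 a - log 2 b \<le> (a - b) / (b * ln 2)"
    using c cb \<open>0 \<le> a - b\<close> by (intro log_diff_le) auto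
  also have "\<dots> \<le> (a - b) / (c * ln 2)"
    using c cb \<open>0 \<le> a - b\<close> by (intro divide_left_mono mult_right_mono mult_pos_pos) auto
  finally have "real w / 2 * (log 2 a - log 2 b) \<le> real w / 2 * (\<gamma> * \<delta> / real w / (c * ln 2))"
    unfolding ab by (intro mult_left_mono) auto
  also have "\<dots> = \<gamma> * \<delta> / (2 * c * ln 2)"
    using w by simp
  finally have log_loss: "real w / 2 * (log 2 a - log 2 b) \<le> \<gamma> * \<delta> / (2 * c * ln 2)" .
  have "remainder_term p \<gamma> B w x k - remainder_term p \<gamma> B w (x(j := x j + \<delta>)) k
      = p^2 * (1-p)^w * (1-p)^k * (real w / 2 * (log 2 a - log 2 b))"
    using \<open>j \<le> Suc k\<close> unfolding remainder_term_def sum_bump[OF assms(5)] a_def b_def S_def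
    by (simp add: power_add algebra_simps)
  also have "\<dots> \<le> p^2 * (1-p)^w * (1-p)^k * (\<gamma> * \<delta> / (2 * c * ln 2))"
    using log_loss assms(1,2) by (intro mult_left_mono) auto
  finally show ?thesis using True by (simp add: c_def mult_ac)
qed

lemma remainder_series_loss_le:
  assumes "0 < p" "p < 1" "0 \<le> \<gamma>" "1 \<le> w" "1 \<le> j" "0 \<le> \<delta>" "\<delta> \<le> R"
    and "admissible (B - R) x"
  shows "suminf (remainder_term p \<gamma> B w x) - suminf (remainder_term p \<gamma> B w (x(j := x j + \<delta>)))
    \<le> p * (1-p)^(j - 1 + w) * (\<gamma> * \<delta> / (2 * (1 + \<gamma> * (R - \<delta>) / real w) * ln 2))"
proof -
  let ?y = "x(j := x j + \<delta>)"
  define L where "L = \<gamma> * \<delta> / (2 * (1 + \<gamma> * (R - \<delta>) / real w) * ln 2)"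
  have "admissible B x" by (rule admissible_mono[OF assms(8)]) (use assms(6,7) in simp)
  then have sx: "summable (remainder_term p \<gamma> B w x)" by (rule summable_remainder_term[OF assms(1-3)])
  have "admissible B ?y" by (rule admissible_bump[OF assms(8,5,6,7)])
  then have sy: "summable (remainder_term p \<gamma> B w ?y)" by (rule summable_remainder_term[OF assms(1-3)])
  have tail: "(\<lambda>k. p^2 * (1-p)^w * L * (if j - 1 \<le> k then (1-p)^k else 0))
      sums (p^2 * (1-p)^w * L * ((1-p)^(j - 1) / (1 - (1-p))))"
    using assms(1,2) by (intro sums_mult geometric_tail_sums) simp
  have "suminf (remainder_term p \<gamma> B w x) - suminf (remainder_term p \<gamma> B w ?y)
      = (\<Sum>k. remainder_term p \<gamma> B w x k - remainder_term p \<gamma> B w ?y k)"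
    by (rule suminf_diff[OF sx sy])
  also have "\<dots> \<le> p^2 * (1-p)^w * L * ((1-p)^(j - 1) / (1 - (1-p)))"
    using remainder_term_loss_le[OF assms, folded L_def]
    by (intro sums_le[OF _ summable_sums[OF summable_diff[OF sx sy]] tail]) simp
  also have "\<dots> = p * (1-p)^(j - 1 + w) * L"
    using assms(1) by (simp add: power_add power2_eq_square field_simps)
  finally show ?thesis by (simp add: L_def)
qed

lemma T_inf_bump_increases:
  assumes "0 < p" "p < 1" "0 < \<gamma>" "1 \<le> w" "1 \<le> j" "0 < \<delta>"
    and "admissible (B - R) x" "x j + \<delta> < (R - \<delta>) / real w"
  shows "T_inf p \<gamma> B w x < T_inf p \<gamma> B w (x(j := x j + \<delta>))"
proof -
  let ?y = "x(j := x j + \<delta>)"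
  define P where "P = p * (1-p)^(j - 1 + w)"
  define a where "a = 1 + \<gamma> * (x j + \<delta>)"
  define c where "c = 1 + \<gamma> * (R - \<delta>) / real w"
  have "0 \<le> x j" using admissible_le(1)[OF assms(7,5)] .
  then have "0 < (R - \<delta>) / real w" using assms(6,8) by linarith
  then have "\<delta> \<le> R" by (simp add: zero_less_divide_iff)
  have "admissible B x" using assms(7) by (rule admissible_mono) (use assms(6) \<open>\<delta> \<le> R\<close> in auto)
  moreover have "admissible B ?y"
    using assms(5,6) \<open>\<delta> \<le> R\<close> by (intro admissible_bump[OF assms(7)]) auto
  ultimately have gain: "P * (\<gamma> * \<delta> / (2 * a * ln 2))
      \<le> suminf (allocation_term p \<gamma> w ?y) - suminf (allocation_term p \<gamma> w x)"
    unfolding P_def a_def using assms(1,2,3,5) by (intro allocation_series_gain_ge) auto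
  have loss: "suminf (remainder_term p \<gamma> B w x) - suminf (remainder_term p \<gamma> B w ?y)
      \<le> P * (\<gamma> * \<delta> / (2 * c * ln 2))"
    unfolding P_def c_def using assms \<open>\<delta> \<le> R\<close> by (intro remainder_series_loss_le) auto
  have "\<gamma> * (x j + \<delta>) < \<gamma> * ((R - \<delta>) / real w)"
    using assms(3,8) by (rule mult_strict_left_mono[rotated])
  then have "a < c" by (simp add: a_def c_def)
  moreover have "0 < a" unfolding a_def using \<open>0 \<le> x j\<close> assms(3,6) by (intro add_pos_nonneg) auto
  ultimately have "P * (\<gamma> * \<delta> / (2 * c * ln 2)) < P * (\<gamma> * \<delta> / (2 * a * ln 2))"
    using assms(1,2,3,6) unfolding P_def
    by (intro mult_strict_left_mono divide_strict_left_mono mult_strict_right_mono) auto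
  with gain loss show ?thesis by (simp add: T_inf_split)
qed

definition extend_by_zero :: "nat \<Rightarrow> (nat \<Rightarrow> real) \<Rightarrow> nat \<Rightarrow> real" where
  "extend_by_zero N \<xi> j = (if 1 \<le> j \<and> j \<le> N then \<xi> j else 0)"

lemma T_N_eq_T_inf_extend_by_zero: "T_N p \<gamma> B w N \<xi> = T_inf p \<gamma> B w (extend_by_zero N \<xi>)"
  by (simp add: T_N_def extend_by_zero_def[abs_def])

lemma extend_by_zero_bump:
  assumes "j \<in> {1..N}"
  shows "extend_by_zero N (\<xi>(j := \<xi> j + \<delta>)) = (extend_by_zero N \<xi>)(j := extend_by_zero N \<xi> j + \<delta>)"
  using assms by (auto simp: extend_by_zero_def)

lemma admissible_extend_by_zero:
  assumes "\<xi> \<in> feasible_N B N"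
  shows "admissible (\<Sum>j=1..N. \<xi> j) (extend_by_zero N \<xi>)"
  unfolding admissible_def
proof safe
  have nonneg: "\<And>j. j \<in> {1..N} \<Longrightarrow> 0 \<le> \<xi> j" using assms by (simp add: feasible_N_def)
  then show "0 \<le> extend_by_zero N \<xi> i" for i by (simp add: extend_by_zero_def)
  fix n
  have "(\<Sum>j=1..n. extend_by_zero N \<xi> j) = (\<Sum>j=1..n. if j \<in> {1..N} then \<xi> j else 0)"
    by (intro sum.cong) (auto simp: extend_by_zero_def)
  also have "\<dots> = (\<Sum>j\<in>{1..n} \<inter> {1..N}. \<xi> j)"
    by (rule sum.inter_restrict[symmetric]) simp
  also have "\<dots> \<le> (\<Sum>j=1..N. \<xi> j)" using nonneg by (intro sum_mono2) auto
  finally show "(\<Sum>j=1..n. extend_by_zero N \<xi> j) \<le> (\<Sum>j=1..N. \<xi> j)" .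
qed

lemma maximizer_coordinate_ge:
  assumes "0 < p" "p < 1" "0 < \<gamma>" "1 \<le> w"
    and max: "is_maximizer_N p \<gamma> B w N \<xi>" and i: "i \<in> {1..N}"
  shows "(B - (\<Sum>j=1..N. \<xi> j)) / real w \<le> \<xi> i"
proof (rule ccontr)
  define R where "R = B - (\<Sum>j=1..N. \<xi> j)"
  define \<delta> where "\<delta> = (R / real w - \<xi> i) / 3"
  let ?\<eta> = "\<xi>(i := \<xi> i + \<delta>)"
  have feasible: "\<xi> \<in> feasible_N B N"
    and optimal: "\<And>\<eta>. \<eta> \<in> feasible_N B N \<Longrightarrow> T_N p \<gamma> B w N \<eta> \<le> T_N p \<gamma> B w N \<xi>"
    using max by (auto simp: is_maximizer_N_def)
  have "0 \<le> \<xi> i" using feasible i by (simp add: feasible_N_def)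
  assume "\<not> (B - (\<Sum>j=1..N. \<xi> j)) / real w \<le> \<xi> i"
  then have "\<xi> i < R / real w" by (simp add: R_def)
  then have \<delta>: "0 < \<delta>" by (simp add: \<delta>_def)
  have "0 < R / real w" using \<open>\<xi> i < R / real w\<close> \<open>0 \<le> \<xi> i\<close> by linarith
  then have "0 < R" using assms(4) by (simp add: zero_less_divide_iff)
  have "\<delta> / real w \<le> \<delta>" using \<delta> assms(4) by (simp add: divide_le_eq)
  then have key: "extend_by_zero N \<xi> i + \<delta> < (R - \<delta>) / real w"
    using i \<delta> by (simp add: extend_by_zero_def \<delta>_def diff_divide_distrib)
  have "R / real w \<le> R" using \<open>0 < R\<close> assms(4) by (simp add: divide_le_eq)
  then have "\<delta> \<le> R" using \<open>0 \<le> \<xi> i\<close> \<open>0 < R\<close> unfolding \<delta>_def by argo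
  have "admissible (B - R) (extend_by_zero N \<xi>)"
    using admissible_extend_by_zero[OF feasible] by (simp add: R_def)
  then have "T_inf p \<gamma> B w (extend_by_zero N \<xi>)
      < T_inf p \<gamma> B w ((extend_by_zero N \<xi>)(i := extend_by_zero N \<xi> i + \<delta>))"
    using assms(1-4) i \<delta> key by (intro T_inf_bump_increases[where R = R]) auto
  then have "T_N p \<gamma> B w N \<xi> < T_N p \<gamma> B w N ?\<eta>"
    by (simp add: T_N_eq_T_inf_extend_by_zero extend_by_zero_bump[OF i])
  moreover have "(\<Sum>j=1..N. ?\<eta> j) = (\<Sum>j=1..N. \<xi> j) + \<delta>"
    using i by (subst sum_bump) auto
  with feasible \<delta> \<open>\<delta> \<le> R\<close> have "?\<eta> \<in> feasible_N B N"
    by (auto simp: feasible_N_def R_def)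
  ultimately show False using optimal by fastforce
qed

lemma maximizer_slack_le:
  assumes "0 < p" "p < 1" "0 < \<gamma>" "1 \<le> w" "1 \<le> N"
    and "is_maximizer_N p \<gamma> B w N \<xi>"
  shows "B - (\<Sum>i=1..N. \<xi> i) \<le> real w * B / real N"
proof -
  define R where "R = B - (\<Sum>i=1..N. \<xi> i)"
  have "0 \<le> R" using assms(6) by (simp add: is_maximizer_N_def feasible_N_def R_def)
  have "real N * (R / real w) = (\<Sum>i=1..N. R / real w)" by simp
  also have "\<dots> \<le> (\<Sum>i=1..N. \<xi> i)"
    using maximizer_coordinate_ge[OF assms(1-4,6)] by (intro sum_mono) (simp add: R_def)
  also have "\<dots> \<le> B" using \<open>0 \<le> R\<close> by (simp add: R_def)
  finally have "real N * R \<le> real w * B" using assms(4) by (simp add: field_simps)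
  then show ?thesis using assms(5) by (simp add: R_def field_simps)
qed

theorem corollary3:
  fixes p \<gamma> B :: real and w :: nat and \<xi> :: "nat \<Rightarrow> nat \<Rightarrow> real"
  assumes "0 < p" and "p < 1" and "0 < \<gamma>" and "0 < B" and "1 \<le> w"
    and "\<And>N. 1 \<le> N \<Longrightarrow> is_maximizer_N p \<gamma> B w N (\<xi> N)"
  shows "(\<lambda>N. B - (\<Sum>i=1..N. \<xi> N i)) \<longlonglongrightarrow> 0"
proof (rule tendsto_sandwich[where f = "\<lambda>_. 0" and h = "\<lambda>N. real w * B / real N"])
  show "\<forall>\<^sub>F N in sequentially. 0 \<le> B - (\<Sum>i=1..N. \<xi> N i)"
    using assms(6) by (intro eventually_sequentiallyI[of 1]) (simp add: is_maximizer_N_def feasible_N_def)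
  show "\<forall>\<^sub>F N in sequentially. B - (\<Sum>i=1..N. \<xi> N i) \<le> real w * B / real N"
    using maximizer_slack_le[OF assms(1-3,5) _ assms(6)] by (intro eventually_sequentiallyI[of 1])
  show "(\<lambda>N. real w * B / real N) \<longlonglongrightarrow> 0" by (rule lim_const_over_n)
qed simp

end
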